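(* Let $h:\mathcal X\times\mathcal S\to\mathcal Y$ be a measurable classifier with values in a finite set $\mathcal Y\subset\mathbb R$, and suppose $h(X,S)$ satisfies statistical parity, i.e. $h(X,S)$ is independent of $S$. Then there exists a transport-based counterfactual model $\Pi$ such that $h$ is $\Pi$-counterfactually fair.
   Context: $(X,S)$ is a random pair with $X$ valued in $\mathcal X\subseteq\mathbb R^d$ and $S$ valued in a finite set $\mathcal S\subset\mathbb R$ with $\mathbb P(S=s)>0$ for all $s$; $\mu_s:=\mathcal L(X\mid S=s)$. $\Pi(P,Q)$ denotes the set of probability measures on $\mathbb R^d\times\mathbb R^d$ with marginals $P$ and $Q$; $t(x,x'):=(x',x)$; $I$ is the identity and $(I\times I)(x)=(x,x)$; $T_\sharp P:=P\circ T^{-1}$. A transport-based counterfactual model is a collection $\Pi=\{\pi_{\langle s'|s\rangle}\}_{s,s'\in\mathcal S}$ of probability measures on $\mathbb R^d\times\mathbb R^d$ such that for all $s,s'$: (i) $\pi_{\langle s'|s\rangle}\in\Pi(\mu_s,\mu_{s'})$; (ii) $\pi_{\langle s|s\rangle}=(I\times I)_\sharp\mu_s$; (iii) $\pi_{\langle s|s'\rangle}=t_\sharp\pi_{\langle s'|s\rangle}$. A predictor $h$ is $\Pi$-counterfactually fair if for every $s,s'\in\mathcal S$ and $\pi_{\langle s'|s\rangle}$-almost every $(x,x')$, $h(x,s)=h(x',s')$. *)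

theory Defs
  imports "HOL-Probability.Probability"
begin

definition cond_law :: "'w measure \<Rightarrow> ('w \<Rightarrow> 'a::euclidean_space) \<Rightarrow> ('w \<Rightarrow> real) \<Rightarrow> real \<Rightarrow> 'a measure" where
  "cond_law M X S s = distr (uniform_measure M {\<omega> \<in> space M. S \<omega> = s}) borel X"

definition coupling :: "'a measure \<Rightarrow> 'b measure \<Rightarrow> ('a \<times> 'b) measure \<Rightarrow> bool" where
  "coupling P Q \<pi> \<longleftrightarrow> prob_space \<pi> \<and> sets \<pi> = sets (P \<Otimes>\<^sub>M Q) \<and>
     distr \<pi> P fst = P \<and> distr \<pi> Q snd = Q"

text \<open>Transport-based counterfactual model; CF s' s stands for pi_<s'|s>.\<close>
definition transport_cf_model :: "real set \<Rightarrow> (real \<Rightarrow> 'a measure) \<Rightarrow> (real \<Rightarrow> real \<Rightarrow> ('a \<times> 'a) measure) \<Rightarrow> bool" where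
  "transport_cf_model SS \<mu> CF \<longleftrightarrow> (\<forall>s\<in>SS. \<forall>s'\<in>SS.
      coupling (\<mu> s) (\<mu> s') (CF s' s) \<and>
      CF s s = distr (\<mu> s) (\<mu> s \<Otimes>\<^sub>M \<mu> s) (\<lambda>x. (x, x)) \<and>
      CF s s' = distr (CF s' s) (\<mu> s' \<Otimes>\<^sub>M \<mu> s) (\<lambda>(x, x'). (x', x)))"

definition cf_fair :: "real set \<Rightarrow> (real \<Rightarrow> real \<Rightarrow> ('a \<times> 'a) measure) \<Rightarrow> ('a \<Rightarrow> real \<Rightarrow> 'y) \<Rightarrow> bool" where
  "cf_fair SS CF h \<longleftrightarrow> (\<forall>s\<in>SS. \<forall>s'\<in>SS. AE p in CF s' s. h (fst p) s = h (snd p) s')"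

end

theory Submission
  imports Defs
begin

text \<open>Under statistical parity the label \<open>h(\<cdot>, s)\<close> has the same law \<open>q\<close> under every
  conditional law \<open>\<mu>\<^sub>s\<close>. For \<open>s \<noteq> s'\<close> couple \<open>\<mu>\<^sub>s\<close> and \<open>\<mu>\<^sub>s'\<close> conditionally independently given the
  label, i.e. by the density \<open>\<one>[h(x,s) = h(x',s') = y] / q(y)\<close> with respect to \<open>\<mu>\<^sub>s \<otimes> \<mu>\<^sub>s'\<close>: integrating
  out either coordinate leaves the indicator of a label of positive mass, so the marginals are right,
  and the coupling only charges pairs with equal labels.\<close>

text \<open>On a label \<open>y\<close> with \<open>q y = 0\<close> the density is \<open>1 / 0 = 0\<close>; this is harmless because such a
  label is carried by a null set.\<close>

definition label_density :: "('a \<Rightarrow> 'l) \<Rightarrow> ('b \<Rightarrow> 'l) \<Rightarrow> ('l \<Rightarrow> real) \<Rightarrow> 'a \<times> 'b \<Rightarrow> ennreal" where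
  "label_density g1 g2 q p =
     (if g1 (fst p) = g2 (snd p) then ennreal (1 / q (g1 (fst p))) else 0)"

definition label_coupling ::
    "'a measure \<Rightarrow> 'b measure \<Rightarrow> ('a \<Rightarrow> 'l) \<Rightarrow> ('b \<Rightarrow> 'l) \<Rightarrow> ('l \<Rightarrow> real) \<Rightarrow> ('a \<times> 'b) measure" where
  "label_coupling M1 M2 g1 g2 q = density (M1 \<Otimes>\<^sub>M M2) (label_density g1 g2 q)"

definition diag_coupling :: "'a measure \<Rightarrow> ('a \<times> 'a) measure" where
  "diag_coupling N = distr N (N \<Otimes>\<^sub>M N) (\<lambda>x. (x, x))"

definition has_label_law :: "'a measure \<Rightarrow> ('a \<Rightarrow> 'l) \<Rightarrow> 'l set \<Rightarrow> ('l \<Rightarrow> real) \<Rightarrow> bool" where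
  "has_label_law M g Y q \<longleftrightarrow> g \<in> measurable M (count_space Y) \<and>
     (\<forall>y\<in>Y. emeasure M {x \<in> space M. g x = y} = ennreal (q y))"

lemma has_label_law_sets:
  assumes "has_label_law M g Y q" and "y \<in> Y"
  shows "{x \<in> space M. g x = y} \<in> sets M"
proof -
  have "g -` {y} \<inter> space M \<in> sets M"
    using assms by (auto simp: has_label_law_def intro: measurable_sets)
  moreover have "g -` {y} \<inter> space M = {x \<in> space M. g x = y}" by auto
  ultimately show ?thesis by simp
qed

lemma AE_has_label_law_pos:
  assumes "finite Y" and law: "has_label_law M g Y q"
  shows "AE x in M. 0 < q (g x)"
proof -
  have "AE x in M. \<forall>y\<in>Y. g x = y \<longrightarrow> 0 < q y"
  proof (rule AE_finite_allI[OF \<open>finite Y\<close>])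
    fix y assume y: "y \<in> Y"
    show "AE x in M. g x = y \<longrightarrow> 0 < q y"
    proof (cases "0 < q y")
      case False
      then have "{x \<in> space M. g x = y} \<in> null_sets M"
        using law y has_label_law_sets[OF law y] by (auto simp: has_label_law_def ennreal_neg)
      then show ?thesis by (rule AE_I') auto
    qed simp
  qed
  moreover have "x \<in> space M \<Longrightarrow> g x \<in> Y" for x
    using law by (auto simp: has_label_law_def measurable_def)
  ultimately show ?thesis by (auto elim!: AE_mp intro!: AE_I2)
qed

lemma measurable_label_pair:
  assumes "finite Y" "g1 \<in> measurable M1 (count_space Y)" "g2 \<in> measurable M2 (count_space Y)"
  shows "(\<lambda>p. (g1 (fst p), g2 (snd p))) \<in> measurable (M1 \<Otimes>\<^sub>M M2) (count_space (Y \<times> Y))"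
proof -
  have "(\<lambda>p. (g1 (fst p), g2 (snd p))) \<in> measurable (M1 \<Otimes>\<^sub>M M2) (count_space Y \<Otimes>\<^sub>M count_space Y)"
    using assms by (intro measurable_Pair)
      (auto intro: measurable_compose[OF measurable_fst] measurable_compose[OF measurable_snd])
  then show ?thesis using pair_measure_count_space[OF \<open>finite Y\<close> \<open>finite Y\<close>] by simp
qed

lemma borel_measurable_label_density:
  assumes "finite Y" "g1 \<in> measurable M1 (count_space Y)" "g2 \<in> measurable M2 (count_space Y)"
  shows "label_density g1 g2 q \<in> borel_measurable (M1 \<Otimes>\<^sub>M M2)"
proof -
  let ?H = "\<lambda>(a, b). if a = b then ennreal (1 / q a) else 0"
  have "?H \<in> borel_measurable (count_space (Y \<times> Y))" by simp
  from measurable_compose[OF measurable_label_pair[OF assms] this] show ?thesis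
    by (simp add: label_density_def[abs_def])
qed

lemma nn_integral_label_density:
  assumes law: "has_label_law M2 g2 Y q" and "g1 x \<in> Y"
  shows "(\<integral>\<^sup>+ y. label_density g1 g2 q (x, y) \<partial>M2) = (if 0 < q (g1 x) then 1 else 0)"
proof -
  have "(\<integral>\<^sup>+ y. label_density g1 g2 q (x, y) \<partial>M2)
      = (\<integral>\<^sup>+ y. ennreal (1 / q (g1 x)) * indicator {y \<in> space M2. g2 y = g1 x} y \<partial>M2)"
    by (intro nn_integral_cong) (auto simp: label_density_def indicator_def)
  also have "\<dots> = ennreal (1 / q (g1 x)) * ennreal (q (g1 x))"
    using has_label_law_sets[OF law \<open>g1 x \<in> Y\<close>] law \<open>g1 x \<in> Y\<close>
    by (simp add: nn_integral_cmult_indicator has_label_law_def)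
  also have "\<dots> = (if 0 < q (g1 x) then 1 else 0)"
    by (cases "0 < q (g1 x)") (auto simp: ennreal_mult''[symmetric] ennreal_neg)
  finally show ?thesis .
qed

lemma distr_fst_label_coupling:
  assumes "sigma_finite_measure M1" "sigma_finite_measure M2" "finite Y"
    and law1: "has_label_law M1 g1 Y q" and law2: "has_label_law M2 g2 Y q"
  shows "distr (label_coupling M1 M2 g1 g2 q) M1 fst = M1"
proof (rule measure_eqI)
  interpret pair_sigma_finite M1 M2
    using assms(1,2) by (simp add: pair_sigma_finite_def)
  let ?F = "label_density g1 g2 q"
  have F: "?F \<in> borel_measurable (M1 \<Otimes>\<^sub>M M2)"
    using borel_measurable_label_density \<open>finite Y\<close> law1 law2 by (auto simp: has_label_law_def)
  have g1Y: "x \<in> space M1 \<Longrightarrow> g1 x \<in> Y" for x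
    using law1 by (auto simp: has_label_law_def measurable_def)
  fix A assume "A \<in> sets (distr (label_coupling M1 M2 g1 g2 q) M1 fst)"
  then have A: "A \<in> sets M1" by simp
  have slice: "(\<integral>\<^sup>+ y. ?F (x, y) * indicator (A \<times> space M2) (x, y) \<partial>M2)
      = indicator A x * (if 0 < q (g1 x) then 1 else 0)" if x: "x \<in> space M1" for x
  proof -
    have "(\<integral>\<^sup>+ y. ?F (x, y) * indicator (A \<times> space M2) (x, y) \<partial>M2)
        = (\<integral>\<^sup>+ y. indicator A x * ?F (x, y) \<partial>M2)"
      by (intro nn_integral_cong) (auto simp: indicator_def)
    also have "\<dots> = indicator A x * (\<integral>\<^sup>+ y. ?F (x, y) \<partial>M2)"
      by (intro nn_integral_cmult measurable_Pair2[OF F x])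
    also have "\<dots> = indicator A x * (if 0 < q (g1 x) then 1 else 0)"
      using g1Y[OF x] by (simp add: nn_integral_label_density[OF law2])
    finally show ?thesis .
  qed
  have "emeasure (distr (label_coupling M1 M2 g1 g2 q) M1 fst) A
      = emeasure (density (M1 \<Otimes>\<^sub>M M2) ?F) (A \<times> space M2)"
    using A sets.sets_into_space[OF A] unfolding label_coupling_def
    by (subst emeasure_distr)
      (auto simp: measurable_cong_sets[OF sets_density refl] space_pair_measure
        intro!: arg_cong[where f="emeasure _"])
  also have "\<dots> = (\<integral>\<^sup>+ p. ?F p * indicator (A \<times> space M2) p \<partial>(M1 \<Otimes>\<^sub>M M2))"
    using F A by (intro emeasure_density) auto
  also have "\<dots> = (\<integral>\<^sup>+ x. \<integral>\<^sup>+ y. ?F (x, y) * indicator (A \<times> space M2) (x, y) \<partial>M2 \<partial>M1)"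
    using F A by (intro M2.nn_integral_fst[symmetric]) auto
  also have "\<dots> = (\<integral>\<^sup>+ x. indicator A x * (if 0 < q (g1 x) then 1 else 0) \<partial>M1)"
    by (intro nn_integral_cong slice)
  also have "\<dots> = (\<integral>\<^sup>+ x. indicator A x \<partial>M1)"
    using AE_has_label_law_pos[OF \<open>finite Y\<close> law1]
    by (intro nn_integral_cong_AE) (auto elim!: AE_mp)
  also have "\<dots> = emeasure M1 A"
    using A by simp
  finally show "emeasure (distr (label_coupling M1 M2 g1 g2 q) M1 fst) A = emeasure M1 A" .
qed simp

lemma distr_swap_label_coupling:
  assumes "sigma_finite_measure M1" "sigma_finite_measure M2" "finite Y"
    and "g1 \<in> measurable M1 (count_space Y)" "g2 \<in> measurable M2 (count_space Y)"
  shows "distr (label_coupling M1 M2 g1 g2 q) (M2 \<Otimes>\<^sub>M M1) (\<lambda>(x, y). (y, x))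
       = label_coupling M2 M1 g2 g1 q"
proof -
  interpret pair_sigma_finite M2 M1
    using assms(1,2) by (simp add: pair_sigma_finite_def)
  have "label_coupling M2 M1 g2 g1 q
      = density (distr (M1 \<Otimes>\<^sub>M M2) (M2 \<Otimes>\<^sub>M M1) (\<lambda>(x, y). (y, x))) (label_density g2 g1 q)"
    by (simp add: label_coupling_def distr_pair_swap[symmetric])
  also have "\<dots> = distr (density (M1 \<Otimes>\<^sub>M M2) (\<lambda>p. label_density g2 g1 q (case p of (x, y) \<Rightarrow> (y, x))))
      (M2 \<Otimes>\<^sub>M M1) (\<lambda>(x, y). (y, x))"
    using assms by (intro density_distr borel_measurable_label_density measurable_pair_swap')
  also have "(\<lambda>p. label_density g2 g1 q (case p of (x, y) \<Rightarrow> (y, x))) = label_density g1 g2 q"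
    by (auto simp: label_density_def)
  finally show ?thesis by (simp add: label_coupling_def)
qed

lemma coupling_label_coupling:
  assumes P1: "prob_space M1" and P2: "prob_space M2" and "finite Y"
    and law1: "has_label_law M1 g1 Y q" and law2: "has_label_law M2 g2 Y q"
  shows "coupling M1 M2 (label_coupling M1 M2 g1 g2 q)"
proof -
  let ?\<pi> = "label_coupling M1 M2 g1 g2 q"
  have sf: "sigma_finite_measure M1" "sigma_finite_measure M2"
    using P1 P2 by (simp_all add: prob_space_imp_sigma_finite)
  have meas: "g1 \<in> measurable M1 (count_space Y)" "g2 \<in> measurable M2 (count_space Y)"
    using law1 law2 by (auto simp: has_label_law_def)
  have sets: "sets ?\<pi> = sets (M1 \<Otimes>\<^sub>M M2)" by (simp add: label_coupling_def)
  have fst_marginal: "distr ?\<pi> M1 fst = M1"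
    using distr_fst_label_coupling[OF sf \<open>finite Y\<close> law1 law2] .
  have "distr ?\<pi> M2 snd = distr (distr ?\<pi> (M2 \<Otimes>\<^sub>M M1) (\<lambda>(x, y). (y, x))) M2 fst"
    by (subst distr_distr) (auto simp: measurable_cong_sets[OF sets refl] comp_def split_beta)
  also have "\<dots> = M2"
    using distr_swap_label_coupling[OF sf \<open>finite Y\<close> meas]
      distr_fst_label_coupling[OF sf(2,1) \<open>finite Y\<close> law2 law1] by simp
  finally have snd_marginal: "distr ?\<pi> M2 snd = M2" .
  have "prob_space (distr ?\<pi> M1 fst)" using fst_marginal P1 by simp
  then have "prob_space ?\<pi>"
    by (rule prob_space_distrD[rotated]) (simp add: measurable_cong_sets[OF sets refl])
  with sets fst_marginal snd_marginal show ?thesis by (simp add: coupling_def)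
qed

lemma sets_label_eq:
  assumes "finite Y" "g1 \<in> measurable M1 (count_space Y)" "g2 \<in> measurable M2 (count_space Y)"
  shows "{p \<in> space (M1 \<Otimes>\<^sub>M M2). g1 (fst p) = g2 (snd p)} \<in> sets (M1 \<Otimes>\<^sub>M M2)"
proof -
  let ?G = "\<lambda>p. (g1 (fst p), g2 (snd p))"
  have "?G -` {z \<in> Y \<times> Y. fst z = snd z} \<inter> space (M1 \<Otimes>\<^sub>M M2) \<in> sets (M1 \<Otimes>\<^sub>M M2)"
    by (rule measurable_sets[OF measurable_label_pair[OF assms]]) auto
  moreover have "?G -` {z \<in> Y \<times> Y. fst z = snd z} \<inter> space (M1 \<Otimes>\<^sub>M M2)
      = {p \<in> space (M1 \<Otimes>\<^sub>M M2). g1 (fst p) = g2 (snd p)}"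
    using assms(2,3) by (auto simp: space_pair_measure measurable_def)
  ultimately show ?thesis by simp
qed

lemma AE_label_coupling:
  assumes "finite Y" "g1 \<in> measurable M1 (count_space Y)" "g2 \<in> measurable M2 (count_space Y)"
  shows "AE p in label_coupling M1 M2 g1 g2 q. g1 (fst p) = g2 (snd p)"
  unfolding label_coupling_def AE_density[OF borel_measurable_label_density[OF assms]]
  by (intro AE_I2) (auto simp: label_density_def split: if_splits)

lemma measurable_diag: "(\<lambda>x. (x, x)) \<in> measurable N (N \<Otimes>\<^sub>M N)"
  by (intro measurable_Pair) auto

lemma coupling_diag_coupling:
  assumes "prob_space N"
  shows "coupling N N (diag_coupling N)"
  using prob_space.prob_space_distr[OF assms measurable_diag] measurable_diag
  by (auto simp: coupling_def diag_coupling_def distr_distr comp_def)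

lemma distr_swap_diag_coupling:
  "distr (diag_coupling N) (N \<Otimes>\<^sub>M N) (\<lambda>(x, y). (y, x)) = diag_coupling N"
  using measurable_diag by (simp add: diag_coupling_def distr_distr comp_def)

lemma AE_diag_coupling:
  assumes "{p \<in> space (N \<Otimes>\<^sub>M N). P p} \<in> sets (N \<Otimes>\<^sub>M N)" and "\<And>x. x \<in> space N \<Longrightarrow> P (x, x)"
  shows "AE p in diag_coupling N. P p"
  unfolding diag_coupling_def using assms by (simp add: AE_distr_iff[OF measurable_diag])

definition label_cf ::
    "('i \<Rightarrow> 'a measure) \<Rightarrow> ('i \<Rightarrow> 'a \<Rightarrow> 'l) \<Rightarrow> ('l \<Rightarrow> real) \<Rightarrow> 'i \<Rightarrow> 'i \<Rightarrow> ('a \<times> 'a) measure" where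
  "label_cf \<mu> g q s' s =
     (if s = s' then diag_coupling (\<mu> s) else label_coupling (\<mu> s) (\<mu> s') (g s) (g s') q)"

lemma label_cf_diag: "label_cf \<mu> g q s s = diag_coupling (\<mu> s)"
  by (simp add: label_cf_def)

lemma label_cf_off_diag:
  "s \<noteq> s' \<Longrightarrow> label_cf \<mu> g q s' s = label_coupling (\<mu> s) (\<mu> s') (g s) (g s') q"
  unfolding label_cf_def by simp

lemma transport_cf_model_label_cf:
  assumes "finite Y" and prob: "\<And>s. s \<in> SS \<Longrightarrow> prob_space (\<mu> s)"
    and law: "\<And>s. s \<in> SS \<Longrightarrow> has_label_law (\<mu> s) (g s) Y q"
  shows "transport_cf_model SS \<mu> (label_cf \<mu> g q)"
  unfolding transport_cf_model_def
proof (intro ballI conjI)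
  fix s s' assume s: "s \<in> SS" and s': "s' \<in> SS"
  show "coupling (\<mu> s) (\<mu> s') (label_cf \<mu> g q s' s)"
  proof (cases "s = s'")
    case True
    show ?thesis
      unfolding True[symmetric] label_cf_diag using coupling_diag_coupling[OF prob[OF s]] .
  next
    case False
    show ?thesis
      unfolding label_cf_off_diag[OF False]
      using coupling_label_coupling[OF prob[OF s] prob[OF s'] \<open>finite Y\<close> law[OF s] law[OF s']] .
  qed
  show "label_cf \<mu> g q s s = distr (\<mu> s) (\<mu> s \<Otimes>\<^sub>M \<mu> s) (\<lambda>x. (x, x))"
    by (simp add: label_cf_diag diag_coupling_def)
  show "label_cf \<mu> g q s s' = distr (label_cf \<mu> g q s' s) (\<mu> s' \<Otimes>\<^sub>M \<mu> s) (\<lambda>(x, x'). (x', x))"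
  proof (cases "s = s'")
    case True
    show ?thesis
      unfolding True[symmetric] label_cf_diag by (rule distr_swap_diag_coupling[symmetric])
  next
    case False
    have "g s \<in> measurable (\<mu> s) (count_space Y)" "g s' \<in> measurable (\<mu> s') (count_space Y)"
      using law s s' by (auto simp: has_label_law_def)
    then show ?thesis
      unfolding label_cf_off_diag[OF False] label_cf_off_diag[OF False[symmetric]]
      using prob_space_imp_sigma_finite[OF prob[OF s]] prob_space_imp_sigma_finite[OF prob[OF s']]
        \<open>finite Y\<close>
      by (intro distr_swap_label_coupling[symmetric])
  qed
qed

lemma AE_label_cf:
  assumes "finite Y" and law: "has_label_law (\<mu> s) (g s) Y q" "has_label_law (\<mu> s') (g s') Y q"
  shows "AE p in label_cf \<mu> g q s' s. g s (fst p) = g s' (snd p)"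
proof (cases "s = s'")
  case True
  have "AE p in diag_coupling (\<mu> s). g s (fst p) = g s (snd p)"
    using \<open>finite Y\<close> law(1)
    by (intro AE_diag_coupling sets_label_eq) (auto simp: has_label_law_def)
  then show ?thesis unfolding True[symmetric] label_cf_diag .
next
  case False
  have "AE p in label_coupling (\<mu> s) (\<mu> s') (g s) (g s') q. g s (fst p) = g s' (snd p)"
    using \<open>finite Y\<close> law by (intro AE_label_coupling) (auto simp: has_label_law_def)
  then show ?thesis unfolding label_cf_off_diag[OF False] .
qed

lemma
  assumes "prob_space M" "X \<in> borel_measurable M" "S \<in> borel_measurable M"
    and pos: "measure M {\<omega> \<in> space M. S \<omega> = s} > 0"
  shows prob_space_cond_law: "prob_space (cond_law M X S s)"
    and emeasure_cond_law: "A \<in> sets borel \<Longrightarrow> emeasure (cond_law M X S s) A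
        = ennreal (measure M {\<omega> \<in> space M. X \<omega> \<in> A \<and> S \<omega> = s} / measure M {\<omega> \<in> space M. S \<omega> = s})"
proof -
  interpret prob_space M by fact
  let ?B = "{\<omega> \<in> space M. S \<omega> = s}"
  have B: "?B \<in> sets M" using assms(3) by measurable
  have X: "X \<in> measurable (uniform_measure M ?B) borel"
    using assms(2) by (simp add: measurable_cong_sets[OF sets_uniform_measure refl])
  have "prob_space (uniform_measure M ?B)"
    using pos B by (intro prob_space_uniform_measure) (auto simp: emeasure_eq_measure)
  then show "prob_space (cond_law M X S s)"
    unfolding cond_law_def by (rule prob_space.prob_space_distr[OF _ X])
  assume A: "A \<in> sets borel"
  have XA: "X -` A \<inter> space M \<in> sets M" using measurable_sets[OF assms(2) A] .
  have "emeasure (cond_law M X S s) A = emeasure M (?B \<inter> (X -` A \<inter> space M)) / emeasure M ?B"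
    unfolding cond_law_def using A X B XA by (simp add: emeasure_distr)
  also have "?B \<inter> (X -` A \<inter> space M) = {\<omega> \<in> space M. X \<omega> \<in> A \<and> S \<omega> = s}" by auto
  finally show "emeasure (cond_law M X S s) A
      = ennreal (measure M {\<omega> \<in> space M. X \<omega> \<in> A \<and> S \<omega> = s} / measure M ?B)"
    using pos by (simp add: emeasure_eq_measure divide_ennreal)
qed

lemma has_label_law_cond_law:
  fixes h :: "'a::euclidean_space \<Rightarrow> real \<Rightarrow> real"
  assumes M: "prob_space M" and X: "X \<in> borel_measurable M" and S: "S \<in> borel_measurable M"
    and pos: "measure M {\<omega> \<in> space M. S \<omega> = s} > 0"
    and h: "(\<lambda>x. h x s) \<in> borel_measurable borel" and "finite Y" "\<And>x. h x s \<in> Y"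
    and indep: "prob_space.indep_var M borel (\<lambda>\<omega>. h (X \<omega>) (S \<omega>)) borel S"
  shows "has_label_law (cond_law M X S s) (\<lambda>x. h x s) Y
           (\<lambda>y. measure M {\<omega> \<in> space M. h (X \<omega>) (S \<omega>) = y})"
proof -
  interpret prob_space M by fact
  have level: "{x. h x s = y} \<in> sets borel" for y
    using measurable_sets[OF h, of "{y}"] by (simp add: vimage_def)
  have "(\<lambda>x. h x s) \<in> measurable (cond_law M X S s) (count_space Y)"
    using level \<open>\<And>x. h x s \<in> Y\<close>
    by (simp add: measurable_count_space_eq2[OF \<open>finite Y\<close>] cond_law_def vimage_def)
  moreover have "emeasure (cond_law M X S s) {x \<in> space (cond_law M X S s). h x s = y}
      = ennreal (measure M {\<omega> \<in> space M. h (X \<omega>) (S \<omega>) = y})" for y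
  proof -
    let ?B = "{\<omega> \<in> space M. S \<omega> = s}"
    have "measure M {\<omega> \<in> space M. X \<omega> \<in> {x. h x s = y} \<and> S \<omega> = s}
        = prob ((\<lambda>\<omega>. (h (X \<omega>) (S \<omega>), S \<omega>)) -` ({y} \<times> {s}) \<inter> space M)"
      by (auto intro!: arg_cong[where f=prob])
    also have "\<dots> = prob {\<omega> \<in> space M. h (X \<omega>) (S \<omega>) = y} * prob ?B"
      by (subst indep_varD[OF indep]) (auto intro!: arg_cong2[where f="(*)"] arg_cong[where f=prob])
    finally show ?thesis
      using emeasure_cond_law[OF M X S pos level] pos by (simp add: cond_law_def)
  qed
  ultimately show ?thesis by (simp add: has_label_law_def)
qed

theorem proposition8:
  fixes M :: "'w measure" and X :: "'w \<Rightarrow> 'a::euclidean_space" and S :: "'w \<Rightarrow> real"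
    and h :: "'a \<Rightarrow> real \<Rightarrow> real" and Y :: "real set"
  assumes "prob_space M"
    and "X \<in> borel_measurable M" and "S \<in> borel_measurable M"
    and "finite (S ` space M)"
    and "\<forall>s \<in> S ` space M. measure M {\<omega> \<in> space M. S \<omega> = s} > 0"
    and "(\<lambda>(x, s). h x s) \<in> borel_measurable (borel \<Otimes>\<^sub>M borel)"
    and "finite Y" and "\<forall>x s. h x s \<in> Y"
    and "prob_space.indep_var M borel (\<lambda>\<omega>. h (X \<omega>) (S \<omega>)) borel S"
  shows "\<exists>CF. transport_cf_model (S ` space M) (cond_law M X S) CF
            \<and> cf_fair (S ` space M) CF h"
proof -
  define q where "q y = measure M {\<omega> \<in> space M. h (X \<omega>) (S \<omega>) = y}" for y
  let ?g = "\<lambda>s x. h x s"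
  have law: "has_label_law (cond_law M X S s) (?g s) Y q" if "s \<in> S ` space M" for s
    unfolding q_def using that assms(5,7-9)
    by (intro has_label_law_cond_law[OF assms(1-3)] measurable_Pair1[OF assms(6), simplified]) auto
  have "transport_cf_model (S ` space M) (cond_law M X S) (label_cf (cond_law M X S) ?g q)"
    using prob_space_cond_law[OF assms(1-3)] assms(5) law
    by (intro transport_cf_model_label_cf[OF \<open>finite Y\<close>]) auto
  moreover have "cf_fair (S ` space M) (label_cf (cond_law M X S) ?g q) h"
    using AE_label_cf[where \<mu>="cond_law M X S" and g="?g", OF \<open>finite Y\<close> law law]
    unfolding cf_fair_def by blast
  ultimately show ?thesis by blast
qed

end
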